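(* Let $\alpha,\beta,\gamma\in I(d)$ with $\alpha\le\beta\le\gamma$. For every $m\ge1$, the map sending a nonvanishing skew-symmetric notched bitableau $(P,Q)$ on $\bar\beta\times\beta$ with rows $P_1,\dots,P_r$, $Q_1,\dots,Q_r$ to $f_{\theta_1,\beta}\cdots f_{\theta_r,\beta}$, where $\theta_i=P_i\cup(\beta\setminus Q_i)$, is a bijection from the set of degree-$2m$ nonvanishing skew-symmetric notched bitableaux on $\bar\beta\times\beta$ bounded by $T_\alpha,W_\gamma$ onto the set of degree-$m$ standard monomials on $Y^\gamma_{\alpha,\beta}$.
   Context: Notation: $m^*=2d+1-m$; $I(d)$ is the set of $d$-subsets of $\{1,\dots,2d\}$ containing exactly one of $m,m^*$ for each $m$ and having an even number of elements $>d$; $v\le w$ iff $v_i\le w_i$ for sorted entries; $\bar\beta=\{1,\dots,2d\}\setminus\beta$. For $\theta\in I(d)$ with $\theta\setminus\beta=\{r_1<\dots<r_{2s}\}$, $f_{\theta,\beta}$ is the Pfaffian of the skew-symmetric $2s\times2s$ matrix $N$ with $N_{ij}=X_{(r_i,r_j^* )}$ for $i<j$, an element of $P=k[X_{(r,c)}:r\notin\beta,c\in\beta,r<c^*]$; the $\beta$-degree of $\theta$ is $s$. A product $f_{\theta_1,\beta}\cdots f_{\theta_r,\beta}$ ($\theta_i\in I(d)$) is a standard monomial on $Y^\gamma_{\alpha,\beta}$ if $\alpha\le\theta_1\le\dots\le\theta_r\le\gamma$ and each $\theta_i$ satisfies $\theta_i<\beta$ or $\theta_i>\beta$; its degree is the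 sum of the $\beta$-degrees. $T_\alpha$ is any subset of $\bar\beta\times\beta$ whose set of first coordinates is $\alpha\setminus\beta$ and set of second coordinates is $\beta\setminus\alpha$ (each coordinate appearing once); $W_\gamma$ likewise with $\gamma\setminus\beta$, $\beta\setminus\gamma$. Notched bitableaux. A notched bitableau is a pair $(P,Q)$ of arrays of the same shape of finitely many left-justified rows (numbered from top) of positive integers; $P_i,Q_i$ the multisets of row $i$; degree = number of boxes of $P$. Write $A-B\le A'-B'$ if $|A^{\le z}|-|B^{\le z}|\ge|A'^{\le z}|-|B'^{\le z}|$ for all $z$; for $|A|=|B|$ with sorted elements $\lambda_j,\delta_j$, $A-B<\emptyset$ (resp. $>\emptyset$) means $\lambda_j<\delta_j$ (resp. $>$) for all $j$. Semistandard: rows strictly increasing and $P_i-Q_i\le P_{i+1}-Q_{i+1}$; nonvanishing: every row $<\emptyset$ or $>\emptyset$. Skew-symmetric: semistandard, even row lengths, and duality (dual of the entry in row $i$, column $j$ of $P$ (resp. $Q$) is the entry in row $i$, column $k_i+1-j$ of $Q$ (resp. $P$); $x<y\Rightarrow\mathrm{dual}(x)>\mathrm{dual}(y)$, $x=y\Rightarrow\mathrm{dual}(x)=\mathrm{dual}(y)$). On $\bar\beta\times\beta$: entries of $P$ in $\bar\beta$, of $Q$ in $\beta$, each entry plus its dual equal to $2d+1$. For finite $S\subseteq\mathbb N^2$, $S_{(1)},S_{(2)}$ are the multisets of coordinates. $(P,Q)$ with $r$ rows is bounded by $T,W$ if $T_{(1)}-T_{(2)}\le P_1-Q_1$ and $P_r-Q_r\le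 W_{(1)}-W_{(2)}$. *)

theory Defs
  imports Main "HOL-Library.Multiset"
begin

definition dualn :: "nat \<Rightarrow> nat \<Rightarrow> nat" where
  "dualn d m = 2*d + 1 - m"

definition Iset :: "nat \<Rightarrow> nat set set" where
  "Iset d = {\<theta>. \<theta> \<subseteq> {1..2*d} \<and> card \<theta> = d
      \<and> (\<forall>m\<in>{1..2*d}. (m \<in> \<theta>) \<noteq> (dualn d m \<in> \<theta>))
      \<and> even (card {x\<in>\<theta>. x > d})}"

definition Ile :: "nat set \<Rightarrow> nat set \<Rightarrow> bool" where
  "Ile v w \<longleftrightarrow> card v = card w \<and>
     (\<forall>i<card v. sorted_list_of_set v ! i \<le> sorted_list_of_set w ! i)"

definition Ilt :: "nat set \<Rightarrow> nat set \<Rightarrow> bool" where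
  "Ilt v w \<longleftrightarrow> Ile v w \<and> v \<noteq> w"

definition beta_degree :: "nat set \<Rightarrow> nat set \<Rightarrow> nat" where
  "beta_degree \<beta> \<theta> = card (\<theta> - \<beta>) div 2"

(* A standard monomial f_{theta_1,beta} ... f_{theta_r,beta} on Y^gamma_{alpha,beta},
   represented by its (formal) index sequence [theta_1, ..., theta_r] *)
definition std_monomial :: "nat \<Rightarrow> nat set \<Rightarrow> nat set \<Rightarrow> nat set \<Rightarrow> nat set list \<Rightarrow> bool" where
  "std_monomial d \<alpha> \<beta> \<gamma> \<theta>s \<longleftrightarrow>
     (\<forall>\<theta>\<in>set \<theta>s. \<theta> \<in> Iset d \<and> (Ilt \<theta> \<beta> \<or> Ilt \<beta> \<theta>))
     \<and> (\<forall>i. Suc i < length \<theta>s \<longrightarrow> Ile (\<theta>s ! i) (\<theta>s ! Suc i))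
     \<and> (\<theta>s \<noteq> [] \<longrightarrow> Ile \<alpha> (hd \<theta>s) \<and> Ile (last \<theta>s) \<gamma>)"

definition monomial_degree :: "nat set \<Rightarrow> nat set list \<Rightarrow> nat" where
  "monomial_degree \<beta> \<theta>s = sum_list (map (beta_degree \<beta>) \<theta>s)"

definition cnt_le :: "nat multiset \<Rightarrow> nat \<Rightarrow> int" where
  "cnt_le A z = int (size (filter_mset (\<lambda>x. x \<le> z) A))"

definition diff_le :: "nat multiset \<Rightarrow> nat multiset \<Rightarrow> nat multiset \<Rightarrow> nat multiset \<Rightarrow> bool" where
  "diff_le A B A' B' \<longleftrightarrow> (\<forall>z. cnt_le A z - cnt_le B z \<ge> cnt_le A' z - cnt_le B' z)"

definition diff_lt_empty :: "nat multiset \<Rightarrow> nat multiset \<Rightarrow> bool" where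
  "diff_lt_empty A B \<longleftrightarrow> size A = size B \<and>
     (\<forall>j<size A. sorted_list_of_multiset A ! j < sorted_list_of_multiset B ! j)"

definition diff_gt_empty :: "nat multiset \<Rightarrow> nat multiset \<Rightarrow> bool" where
  "diff_gt_empty A B \<longleftrightarrow> size A = size B \<and>
     (\<forall>j<size A. sorted_list_of_multiset A ! j > sorted_list_of_multiset B ! j)"

(* A notched bitableau (P,Q): P, Q are lists of rows (row i = P ! i), rows are
   left-justified lists of positive integers, nonempty, same shape *)
definition bitableau :: "nat list list \<Rightarrow> nat list list \<Rightarrow> bool" where
  "bitableau P Q \<longleftrightarrow> length P = length Q \<and>
     (\<forall>i<length P. length (P ! i) = length (Q ! i) \<and> P ! i \<noteq> []
        \<and> (\<forall>x\<in>set (P ! i). x > 0) \<and> (\<forall>x\<in>set (Q ! i). x > 0))"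

definition tab_degree :: "nat list list \<Rightarrow> nat" where
  "tab_degree P = sum_list (map length P)"

definition semistandard :: "nat list list \<Rightarrow> nat list list \<Rightarrow> bool" where
  "semistandard P Q \<longleftrightarrow> bitableau P Q \<and>
     (\<forall>i<length P. sorted_wrt (<) (P ! i) \<and> sorted_wrt (<) (Q ! i)) \<and>
     (\<forall>i. Suc i < length P \<longrightarrow>
        diff_le (mset (P ! i)) (mset (Q ! i)) (mset (P ! Suc i)) (mset (Q ! Suc i)))"

definition nonvanishing :: "nat list list \<Rightarrow> nat list list \<Rightarrow> bool" where
  "nonvanishing P Q \<longleftrightarrow> (\<forall>i<length P.
     diff_lt_empty (mset (P ! i)) (mset (Q ! i)) \<or> diff_gt_empty (mset (P ! i)) (mset (Q ! i)))"

(* boxes: (True,i,j) = row i column j of P, (False,i,j) = row i column j of Q (0-based) *)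
definition valid_box :: "nat list list \<Rightarrow> bool \<times> nat \<times> nat \<Rightarrow> bool" where
  "valid_box P b \<longleftrightarrow> (case b of (_, i, j) \<Rightarrow> i < length P \<and> j < length (P ! i))"

definition box_val :: "nat list list \<Rightarrow> nat list list \<Rightarrow> bool \<times> nat \<times> nat \<Rightarrow> nat" where
  "box_val P Q b = (case b of (s, i, j) \<Rightarrow> (if s then P else Q) ! i ! j)"

(* dual of entry in row i, column j of P (resp. Q) is entry in row i, column k_i+1-j of Q (resp. P) *)
definition box_dual :: "nat list list \<Rightarrow> nat list list \<Rightarrow> bool \<times> nat \<times> nat \<Rightarrow> nat" where
  "box_dual P Q b = (case b of (s, i, j) \<Rightarrow> (if s then Q else P) ! i ! (length (P ! i) - 1 - j))"

definition skew_symmetric :: "nat list list \<Rightarrow> nat list list \<Rightarrow> bool" where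
  "skew_symmetric P Q \<longleftrightarrow> semistandard P Q \<and>
     (\<forall>i<length P. even (length (P ! i))) \<and>
     (\<forall>x y. valid_box P x \<longrightarrow> valid_box P y \<longrightarrow>
        (box_val P Q x < box_val P Q y \<longrightarrow> box_dual P Q x > box_dual P Q y) \<and>
        (box_val P Q x = box_val P Q y \<longrightarrow> box_dual P Q x = box_dual P Q y))"

(* skew-symmetric on \<bar>\<beta> \<times> \<beta> (the skew-symmetry itself is required separately) *)
definition on_bbar_b :: "nat \<Rightarrow> nat set \<Rightarrow> nat list list \<Rightarrow> nat list list \<Rightarrow> bool" where
  "on_bbar_b d \<beta> P Q \<longleftrightarrow>
     (\<forall>i<length P. set (P ! i) \<subseteq> {1..2*d} - \<beta> \<and> set (Q ! i) \<subseteq> \<beta>) \<and>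
     (\<forall>x. valid_box P x \<longrightarrow> box_val P Q x + box_dual P Q x = 2*d + 1)"

definition coord1 :: "(nat \<times> nat) set \<Rightarrow> nat multiset" where
  "coord1 S = image_mset fst (mset_set S)"
definition coord2 :: "(nat \<times> nat) set \<Rightarrow> nat multiset" where
  "coord2 S = image_mset snd (mset_set S)"

definition bounded_by :: "(nat \<times> nat) set \<Rightarrow> (nat \<times> nat) set \<Rightarrow> nat list list \<Rightarrow> nat list list \<Rightarrow> bool" where
  "bounded_by T W P Q \<longleftrightarrow> P \<noteq> [] \<longrightarrow>
     diff_le (coord1 T) (coord2 T) (mset (hd P)) (mset (hd Q)) \<and>
     diff_le (mset (last P)) (mset (last Q)) (coord1 W) (coord2 W)"

(* T is an admissible T_alpha (and W an admissible W_gamma, with alpha := gamma):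
   subset of \<bar>\<beta> \<times> \<beta> with first coordinates alpha \ beta, second beta \ alpha, each once *)
definition is_T :: "nat \<Rightarrow> nat set \<Rightarrow> nat set \<Rightarrow> (nat \<times> nat) set \<Rightarrow> bool" where
  "is_T d \<beta> \<alpha> T \<longleftrightarrow> T \<subseteq> ({1..2*d} - \<beta>) \<times> \<beta> \<and> fst ` T = \<alpha> - \<beta> \<and> snd ` T = \<beta> - \<alpha>
     \<and> inj_on fst T \<and> inj_on snd T"

definition tab_to_monomial :: "nat set \<Rightarrow> nat list list \<times> nat list list \<Rightarrow> nat set list" where
  "tab_to_monomial \<beta> PQ = map (\<lambda>(p, q). set p \<union> (\<beta> - set q)) (zip (fst PQ) (snd PQ))"

end

theory Submission
  imports Defs
begin

text \<open>
  For \<open>\<theta>, \<beta> \<in> I(d)\<close> the set \<open>\<theta>\<close> is determined by \<open>\<theta> - \<beta>\<close>, because \<open>\<beta> - \<theta>\<close> is the image of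
  \<open>\<theta> - \<beta>\<close> under \<open>m \<mapsto> m\<^sup>*\<close>. Listed in increasing order, these two sets are exactly a pair of rows
  \<open>P\<^sub>i, Q\<^sub>i\<close> of a skew-symmetric bitableau on the complement of \<open>\<beta>\<close> times \<open>\<beta>\<close>, the duality condition
  saying \<open>Q\<^sub>i = P\<^sub>i\<^sup>*\<close>, and half the row length is the \<open>\<beta>\<close>-degree. All order conditions transfer
  through the counting identity \<open>|\<theta>\<^sup>\<le>\<^sup>z| = |\<beta>\<^sup>\<le>\<^sup>z| - |Q\<^sup>\<le>\<^sup>z| + |P\<^sup>\<le>\<^sup>z|\<close>: comparing the sorted
  entries of two sets of equal size amounts to comparing their counting functions in reverse, so
  \<open>\<theta> \<le> \<theta>'\<close> becomes \<open>P - Q \<le> P' - Q'\<close>, the bounds by \<open>T\<^sub>\<alpha>, W\<^sub>\<gamma>\<close> become \<open>\<alpha> \<le> \<theta>\<^sub>1\<close> and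
  \<open>\<theta>\<^sub>r \<le> \<gamma>\<close>, and nonvanishing of a row becomes \<open>\<theta> < \<beta>\<close> or \<open>\<theta> > \<beta>\<close>.
\<close>

definition count_upto :: "nat set \<Rightarrow> nat \<Rightarrow> nat" where
  "count_upto S z = card {x\<in>S. x \<le> z}"

lemma sorted_list_of_set_set_strict: "sorted_wrt (<) (xs::nat list) \<Longrightarrow> sorted_list_of_set (set xs) = xs"
  by (metis finite_set set_sorted_list_of_set strict_sorted_equal strict_sorted_list_of_set)

lemma cnt_le_mset_distinct:
  assumes "distinct p"
  shows "cnt_le (mset p) z = int (count_upto (set p) z)"
proof -
  have "size (filter_mset (\<lambda>x. x \<le> z) (mset p)) = length (filter (\<lambda>x. x \<le> z) p)"
    by (metis mset_filter size_mset)
  also have "\<dots> = card {x\<in>set p. x \<le> z}"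
    using assms by (metis distinct_card distinct_filter set_filter)
  finally show ?thesis unfolding cnt_le_def count_upto_def by simp
qed

lemma cnt_le_mset_set: "finite A \<Longrightarrow> cnt_le (mset_set A) z = int (count_upto A z)"
  unfolding cnt_le_def count_upto_def by simp

lemma count_upto_sorted_nth:
  assumes "sorted_wrt (<) (xs::nat list)"
  shows "count_upto (set xs) z = card {i. i < length xs \<and> xs!i \<le> z}"
proof -
  have "{x\<in>set xs. x \<le> z} = (!) xs ` {i. i < length xs \<and> xs!i \<le> z}"
    by (auto simp: in_set_conv_nth)
  moreover have "inj_on ((!) xs) {i. i < length xs \<and> xs!i \<le> z}"
    using inj_on_nth[of xs] assms by (simp add: strict_sorted_iff)
  ultimately show ?thesis unfolding count_upto_def by (simp add: card_image)
qed

lemma sorted_nth_le_iff_count_upto: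
  assumes sx: "sorted_wrt (<) (xs::nat list)" and sy: "sorted_wrt (<) ys"
    and l: "length xs = length ys"
  shows "(\<forall>i<length xs. xs!i \<le> ys!i) \<longleftrightarrow> (\<forall>z. count_upto (set ys) z \<le> count_upto (set xs) z)"
proof
  assume h: "\<forall>i<length xs. xs!i \<le> ys!i"
  show "\<forall>z. count_upto (set ys) z \<le> count_upto (set xs) z"
  proof
    fix z
    have "{i. i < length ys \<and> ys!i \<le> z} \<subseteq> {i. i < length xs \<and> xs!i \<le> z}"
    proof (intro subsetI)
      fix i assume "i \<in> {i. i < length ys \<and> ys!i \<le> z}"
      then show "i \<in> {i. i < length xs \<and> xs!i \<le> z}" using h[rule_format, of i] l by simp
    qed
    then show "count_upto (set ys) z \<le> count_upto (set xs) z"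
      unfolding count_upto_sorted_nth[OF sx] count_upto_sorted_nth[OF sy] by (intro card_mono) auto
  qed
next
  assume h: "\<forall>z. count_upto (set ys) z \<le> count_upto (set xs) z"
  have mono: "xs!j \<le> xs!i" "ys!j \<le> ys!i" if "j \<le> i" "i < length xs" for i j
    using that l sorted_nth_mono[OF strict_sorted_imp_sorted[OF sx]]
      sorted_nth_mono[OF strict_sorted_imp_sorted[OF sy]] by simp_all
  show "\<forall>i<length xs. xs!i \<le> ys!i"
  proof (rule ccontr)
    assume "\<not> (\<forall>i<length xs. xs!i \<le> ys!i)"
    then obtain i where i: "i < length xs" "ys!i < xs!i" by force
    \<comment> \<open>at \<open>z = ys!i\<close> the first \<open>i+1\<close> entries of \<open>ys\<close> are counted, but at most \<open>i\<close> of \<open>xs\<close>\<close>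
    have "{..i} \<subseteq> {j. j < length ys \<and> ys!j \<le> ys!i}"
      using mono(2)[of _ i] i(1) l by auto
    then have "card {..i} \<le> card {j. j < length ys \<and> ys!j \<le> ys!i}"
      by (intro card_mono) auto
    then have "Suc i \<le> count_upto (set ys) (ys!i)"
      unfolding count_upto_sorted_nth[OF sy] by simp
    moreover have "{j. j < length xs \<and> xs!j \<le> ys!i} \<subseteq> {..<i}"
    proof (intro subsetI)
      fix j assume j: "j \<in> {j. j < length xs \<and> xs!j \<le> ys!i}"
      show "j \<in> {..<i}"
      proof (rule ccontr)
        assume "j \<notin> {..<i}"
        then have "xs!i \<le> xs!j" using mono(1)[of i j] j by simp
        then show False using i(2) j by simp
      qed
    qed
    then have "card {j. j < length xs \<and> xs!j \<le> ys!i} \<le> card {..<i}"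
      by (intro card_mono) auto
    then have "count_upto (set xs) (ys!i) \<le> i"
      unfolding count_upto_sorted_nth[OF sx] by simp
    ultimately show False using h[rule_format, of "ys!i"] by simp
  qed
qed

lemma Ile_iff_count_upto:
  assumes "finite v" "finite w" "card v = card w"
  shows "Ile v w \<longleftrightarrow> (\<forall>z. count_upto w z \<le> count_upto v z)"
proof -
  let ?xs = "sorted_list_of_set v" and ?ys = "sorted_list_of_set w"
  have "Ile v w \<longleftrightarrow> (\<forall>i<length ?xs. ?xs!i \<le> ?ys!i)"
    unfolding Ile_def using assms(3) by simp
  also have "\<dots> \<longleftrightarrow> (\<forall>z. count_upto (set ?ys) z \<le> count_upto (set ?xs) z)"
    by (rule sorted_nth_le_iff_count_upto) (simp_all add: assms(3) strict_sorted_list_of_set)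
  finally show ?thesis using assms(1,2) by simp
qed

lemma Ile_set_iff_nth:
  assumes "sorted_wrt (<) (p::nat list)" "sorted_wrt (<) q" "length p = length q"
  shows "Ile (set p) (set q) \<longleftrightarrow> (\<forall>j<length p. p!j \<le> q!j)"
  using assms sorted_list_of_set_set_strict[OF assms(1)] sorted_list_of_set_set_strict[OF assms(2)]
    distinct_card strict_sorted_iff
  unfolding Ile_def by metis

lemma count_upto_exchange:
  assumes "finite B" "P \<inter> B = {}" "Q \<subseteq> B"
  shows "int (count_upto (P \<union> (B - Q)) z) = int (count_upto B z) - int (count_upto Q z) + int (count_upto P z)"
proof -
  have "{x\<in>P \<union> (B - Q). x \<le> z} = {x\<in>P. x \<le> z} \<union> ({x\<in>B. x \<le> z} - {x\<in>Q. x \<le> z})" by auto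
  moreover have "card ({x\<in>P. x \<le> z} \<union> ({x\<in>B. x \<le> z} - {x\<in>Q. x \<le> z}))
        = card {x\<in>P. x \<le> z} + card ({x\<in>B. x \<le> z} - {x\<in>Q. x \<le> z})"
    using assms by (intro card_Un_disjoint) auto
  moreover have "card ({x\<in>B. x \<le> z} - {x\<in>Q. x \<le> z}) = card {x\<in>B. x \<le> z} - card {x\<in>Q. x \<le> z}"
    using assms by (intro card_Diff_subset) auto
  moreover have "card {x\<in>Q. x \<le> z} \<le> card {x\<in>B. x \<le> z}"
    using assms by (intro card_mono) auto
  ultimately show ?thesis unfolding count_upto_def by simp
qed

lemma Ile_iff_count_upto_diff:
  assumes "finite X" "finite Y" "finite B" "card X = card Y"
  shows "Ile X Y \<longleftrightarrow> (\<forall>z. int (count_upto (X - B) z) - int (count_upto (B - X) z)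
                          \<ge> int (count_upto (Y - B) z) - int (count_upto (B - Y) z))"
proof -
  have "S = (S - B) \<union> (B - (B - S))" for S by auto
  then have e: "int (count_upto S z) = int (count_upto B z) - int (count_upto (B - S) z) + int (count_upto (S - B) z)"
    for S z using count_upto_exchange[of B "S - B" "B - S" z] assms(3) by auto
  have "count_upto Y z \<le> count_upto X z \<longleftrightarrow>
      int (count_upto (X - B) z) - int (count_upto (B - X) z) \<ge> int (count_upto (Y - B) z) - int (count_upto (B - Y) z)"
    for z using e[of X z] e[of Y z] by linarith
  then show ?thesis using Ile_iff_count_upto[OF assms(1,2,4)] by simp
qed

lemma dualn_dualn: "x \<le> 2*d+1 \<Longrightarrow> dualn d (dualn d x) = x"
  unfolding dualn_def by simp

lemma dualn_in_range: "x \<in> {1..2*d} \<Longrightarrow> dualn d x \<in> {1..2*d}"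
  unfolding dualn_def by auto

lemma inj_on_dualn: "inj_on (dualn d) {1..2*d}"
  unfolding inj_on_def dualn_def by auto

lemma dualn_less_dualn: "a \<in> {1..2*d} \<Longrightarrow> b \<in> {1..2*d} \<Longrightarrow> a < b \<Longrightarrow> dualn d b < dualn d a"
  unfolding dualn_def by simp

lemma sorted_list_of_set_dualn_image:
  assumes "S \<subseteq> {1..2*d}"
  shows "sorted_list_of_set (dualn d ` S) = rev (map (dualn d) (sorted_list_of_set S))"
proof -
  have fin: "finite S" using assms finite_subset by blast
  let ?l = "rev (map (dualn d) (sorted_list_of_set S))"
  have "sorted_wrt (>) (map (dualn d) (sorted_list_of_set S))"
    unfolding sorted_wrt_map
    by (rule sorted_wrt_mono_rel[OF _ strict_sorted_list_of_set]) (use fin assms in \<open>auto simp: dualn_def\<close>)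
  then have "sorted_wrt (<) ?l" by (simp add: sorted_wrt_rev)
  moreover have "set ?l = dualn d ` S" using fin by simp
  ultimately show ?thesis by (metis sorted_list_of_set_set_strict)
qed

lemma IsetD:
  assumes "B \<in> Iset d"
  shows "finite B" "B \<subseteq> {1..2*d}" "card B = d"
    "\<And>x. x \<in> {1..2*d} \<Longrightarrow> x \<notin> B \<Longrightarrow> dualn d x \<in> B"
    "\<And>x. x \<in> {1..2*d} \<Longrightarrow> x \<in> B \<Longrightarrow> dualn d x \<notin> B"
    "even (card {x\<in>B. x > d})"
  using assms unfolding Iset_def by (auto intro: finite_subset)

lemma card_gt_exchange:
  assumes "finite B" "P \<subseteq> {1..2*d}" "P \<inter> B = {}" "dualn d ` P \<subseteq> B"
  shows "int (card {x\<in>P \<union> (B - dualn d ` P). x > d})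
     = int (card {x\<in>B. x > d}) - int (card {x\<in>P. x \<le> d}) + int (card {x\<in>P. x > d})"
proof -
  let ?D = "dualn d ` P"
  have fP: "finite P" using assms(2) finite_subset by blast
  have "{x\<in>P \<union> (B - ?D). x > d} = {x\<in>P. x > d} \<union> ({x\<in>B. x > d} - {x\<in>?D. x > d})" by auto
  moreover have "card ({x\<in>P. x > d} \<union> ({x\<in>B. x > d} - {x\<in>?D. x > d}))
        = card {x\<in>P. x > d} + card ({x\<in>B. x > d} - {x\<in>?D. x > d})"
    using assms fP by (intro card_Un_disjoint) auto
  moreover have "card ({x\<in>B. x > d} - {x\<in>?D. x > d}) = card {x\<in>B. x > d} - card {x\<in>?D. x > d}"
    using assms by (intro card_Diff_subset) (auto intro: finite_subset)
  moreover have "card {x\<in>?D. x > d} \<le> card {x\<in>B. x > d}"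
    using assms by (intro card_mono) auto
  moreover have "{x\<in>?D. x > d} = dualn d ` {x\<in>P. x \<le> d}"
    using assms(2) by (auto simp: dualn_def image_iff)
  moreover have "card (dualn d ` {x\<in>P. x \<le> d}) = card {x\<in>P. x \<le> d}"
    using assms(2) by (intro card_image inj_on_subset[OF inj_on_dualn]) auto
  ultimately show ?thesis by simp
qed

text \<open>Replacing \<open>P\<^sup>* \<subseteq> \<beta>\<close> by \<open>P\<close> changes the number of entries \<open>> d\<close> by \<open>|P| - 2|P\<^sup>\<le>\<^sup>d|\<close>.\<close>

lemma even_card_gt_exchange_iff:
  assumes B: "B \<in> Iset d" and P: "P \<subseteq> {1..2*d} - B"
  shows "even (card {x\<in>P \<union> (B - dualn d ` P). x > d}) \<longleftrightarrow> even (card P)"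
proof -
  have fP: "finite P" using P finite_subset by blast
  have "int (card {x\<in>P \<union> (B - dualn d ` P). x > d})
     = int (card {x\<in>B. x > d}) - int (card {x\<in>P. x \<le> d}) + int (card {x\<in>P. x > d})"
    using P IsetD[OF B] by (intro card_gt_exchange) auto
  moreover have "card P = card {x\<in>P. x \<le> d} + card {x\<in>P. x > d}"
    using fP by (subst card_Un_disjoint[symmetric]) (auto intro: arg_cong[where f=card])
  moreover obtain k where "card {x\<in>B. x > d} = 2*k" using IsetD(6)[OF B] by auto
  ultimately have "int (card {x\<in>P \<union> (B - dualn d ` P). x > d})
      = 2 * (int k - int (card {x\<in>P. x \<le> d})) + int (card P)"
    by simp
  then have "even (int (card {x\<in>P \<union> (B - dualn d ` P). x > d})) \<longleftrightarrow> even (int (card P))"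
    by simp
  then show ?thesis by simp
qed

lemma exchange_in_Iset:
  assumes B: "B \<in> Iset d" and P: "P \<subseteq> {1..2*d} - B" and ev: "even (card P)"
  shows "P \<union> (B - dualn d ` P) \<in> Iset d"
proof -
  note Bp = IsetD[OF B]
  let ?\<theta> = "P \<union> (B - dualn d ` P)"
  have fP: "finite P" using P finite_subset by blast
  have DB: "dualn d ` P \<subseteq> B" using P Bp(4) by auto
  have "card ?\<theta> = card P + card (B - dualn d ` P)"
    using P fP Bp(1) by (intro card_Un_disjoint) auto
  moreover have "card (B - dualn d ` P) = card B - card (dualn d ` P)"
    using DB Bp(1) by (intro card_Diff_subset) (auto intro: finite_subset)
  moreover have "card (dualn d ` P) \<le> card B" using DB Bp(1) by (intro card_mono) auto
  moreover have "card (dualn d ` P) = card P"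
    using P by (intro card_image inj_on_subset[OF inj_on_dualn]) auto
  ultimately have card: "card ?\<theta> = d" using Bp(3) by simp
  have "(m \<in> ?\<theta>) \<noteq> (dualn d m \<in> ?\<theta>)" if m: "m \<in> {1..2*d}" for m
  proof -
    have mD: "m \<in> dualn d ` P \<longleftrightarrow> dualn d m \<in> P"
      using P m dualn_dualn[of m d] dualn_dualn[of _ d] by (auto intro: rev_image_eqI)
    have dmD: "dualn d m \<in> dualn d ` P \<longleftrightarrow> m \<in> P"
      using P m inj_onD[OF inj_on_dualn] by blast
    show ?thesis
      using P Bp(4)[OF m] Bp(5)[OF m] mD dmD by auto
  qed
  moreover have "even (card {x\<in>?\<theta>. x > d})"
    using even_card_gt_exchange_iff[OF B P] ev by simp
  ultimately show ?thesis unfolding Iset_def using card P Bp(2) by auto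
qed

lemma Iset_minus_eq_dualn_image:
  assumes B: "B \<in> Iset d" and th: "\<theta> \<in> Iset d"
  shows "B - \<theta> = dualn d ` (\<theta> - B)"
proof
  note Bp = IsetD[OF B] and Tp = IsetD[OF th]
  show "B - \<theta> \<subseteq> dualn d ` (\<theta> - B)"
  proof
    fix y assume y: "y \<in> B - \<theta>"
    then have yr: "y \<in> {1..2*d}" using Bp(2) by auto
    have "dualn d y \<in> \<theta> - B" using Tp(4)[OF yr] Bp(5)[OF yr] y by auto
    moreover have "y = dualn d (dualn d y)" using yr by (intro dualn_dualn[symmetric]) auto
    ultimately show "y \<in> dualn d ` (\<theta> - B)" by blast
  qed
  show "dualn d ` (\<theta> - B) \<subseteq> B - \<theta>"
  proof
    fix y assume "y \<in> dualn d ` (\<theta> - B)"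
    then obtain x where x: "x \<in> \<theta>" "x \<notin> B" "y = dualn d x" by auto
    then have "x \<in> {1..2*d}" using Tp(2) by auto
    then show "y \<in> B - \<theta>" using Tp(5) Bp(4) x by auto
  qed
qed

lemma even_card_Iset_minus:
  assumes B: "B \<in> Iset d" and th: "\<theta> \<in> Iset d"
  shows "even (card (\<theta> - B))"
proof -
  have "\<theta> - B \<subseteq> {1..2*d} - B" using IsetD(2)[OF th] by auto
  note exchange = even_card_gt_exchange_iff[OF B this]
  have "\<theta> = (\<theta> - B) \<union> (B - dualn d ` (\<theta> - B))"
    using Iset_minus_eq_dualn_image[OF B th] by auto
  then show ?thesis using exchange IsetD(6)[OF th] by simp
qed

definition skew_row :: "nat \<Rightarrow> nat set \<Rightarrow> nat list \<Rightarrow> nat list \<Rightarrow> bool" where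
  "skew_row d B p q \<longleftrightarrow> sorted_wrt (<) p \<and> sorted_wrt (<) q \<and> length p = length q \<and> p \<noteq> []
     \<and> even (length p) \<and> set p \<subseteq> {1..2*d} - B \<and> set q = dualn d ` set p"

definition row_P :: "nat set \<Rightarrow> nat set \<Rightarrow> nat list" where
  "row_P B \<theta> = sorted_list_of_set (\<theta> - B)"

definition row_Q :: "nat set \<Rightarrow> nat set \<Rightarrow> nat list" where
  "row_Q B \<theta> = sorted_list_of_set (B - \<theta>)"

lemma skew_rowD:
  assumes B: "B \<in> Iset d" and r: "skew_row d B p q"
  defines "\<theta> \<equiv> set p \<union> (B - set q)"
  shows "\<theta> \<in> Iset d" "\<theta> - B = set p" "B - \<theta> = set q" "row_P B \<theta> = p" "row_Q B \<theta> = q"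
    "set q \<subseteq> B" "q = rev (map (dualn d) p)" "set p \<inter> B = {}" "card \<theta> = d" "\<theta> \<noteq> B"
proof -
  have sp: "sorted_wrt (<) p" and sq: "sorted_wrt (<) q" and pr: "set p \<subseteq> {1..2*d} - B"
    and qd: "set q = dualn d ` set p" and ev: "even (length p)" and ne: "p \<noteq> []"
    using r unfolding skew_row_def by auto
  show qB: "set q \<subseteq> B" using qd pr IsetD(4)[OF B] by auto
  show "\<theta> \<in> Iset d"
    unfolding \<theta>_def qd using exchange_in_Iset[OF B pr] ev distinct_card sp strict_sorted_iff by metis
  then show "card \<theta> = d" by (rule IsetD(3))
  show pB: "set p \<inter> B = {}" using pr by auto
  show tB: "\<theta> - B = set p" unfolding \<theta>_def using pB by auto
  show Bt: "B - \<theta> = set q" unfolding \<theta>_def using pB qB by auto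
  show "row_P B \<theta> = p" unfolding row_P_def tB using sorted_list_of_set_set_strict[OF sp] .
  show "row_Q B \<theta> = q" unfolding row_Q_def Bt using sorted_list_of_set_set_strict[OF sq] .
  show "q = rev (map (dualn d) p)"
    using sorted_list_of_set_dualn_image[of "set p" d] pr
      sorted_list_of_set_set_strict[OF sp] sorted_list_of_set_set_strict[OF sq] qd by auto
  show "\<theta> \<noteq> B" using tB ne by auto
qed

lemma skew_row_row_PQ:
  assumes B: "B \<in> Iset d" and th: "\<theta> \<in> Iset d" and ne: "\<theta> \<noteq> B"
  shows "skew_row d B (row_P B \<theta>) (row_Q B \<theta>)"
proof -
  note Bp = IsetD[OF B] and Tp = IsetD[OF th]
  have sets: "set (row_P B \<theta>) = \<theta> - B" "set (row_Q B \<theta>) = B - \<theta>"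
    unfolding row_P_def row_Q_def using Tp(1) Bp(1) by auto
  have "card (B - \<theta>) = card (\<theta> - B)" unfolding Iset_minus_eq_dualn_image[OF B th]
    using Tp(2) by (intro card_image inj_on_subset[OF inj_on_dualn]) auto
  moreover have "\<theta> - B \<noteq> {}"
    using ne Bp(1,3) Tp(3) card_subset_eq by blast
  ultimately show ?thesis unfolding skew_row_def
    using sets Iset_minus_eq_dualn_image[OF B th] even_card_Iset_minus[OF B th] Tp(1,2) Bp(1)
    by (auto simp: row_P_def row_Q_def strict_sorted_list_of_set)
qed

lemma exchange_row_PQ:
  assumes "finite \<theta>" "finite B"
  shows "set (row_P B \<theta>) \<union> (B - set (row_Q B \<theta>)) = \<theta>"
  using assms unfolding row_P_def row_Q_def by auto

lemma cnt_le_mset_sorted: "sorted_wrt (<) p \<Longrightarrow> cnt_le (mset p) z = int (count_upto (set p) z)"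
  using cnt_le_mset_distinct strict_sorted_iff by blast

lemma coords_is_T:
  assumes "is_T d B \<alpha> T"
  shows "coord1 T = mset_set (\<alpha> - B)" "coord2 T = mset_set (B - \<alpha>)"
  using assms image_mset_mset_set[of fst T] image_mset_mset_set[of snd T]
  unfolding is_T_def coord1_def coord2_def by simp_all

lemma Ile_rows_iff_diff_le:
  assumes B: "B \<in> Iset d" and r1: "skew_row d B p1 q1" and r2: "skew_row d B p2 q2"
  shows "Ile (set p1 \<union> (B - set q1)) (set p2 \<union> (B - set q2))
    \<longleftrightarrow> diff_le (mset p1) (mset q1) (mset p2) (mset q2)"
proof -
  have "sorted_wrt (<) p1" "sorted_wrt (<) q1" "sorted_wrt (<) p2" "sorted_wrt (<) q2"
    using r1 r2 unfolding skew_row_def by auto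
  then show ?thesis
    using Ile_iff_count_upto_diff[of "set p1 \<union> (B - set q1)" "set p2 \<union> (B - set q2)" B]
      skew_rowD(2,3,9)[OF B r1] skew_rowD(2,3,9)[OF B r2] IsetD(1)[OF B]
    by (simp add: diff_le_def cnt_le_mset_sorted)
qed

lemma Ile_is_T_iff_diff_le:
  assumes B: "B \<in> Iset d" and A: "\<alpha> \<in> Iset d" and T: "is_T d B \<alpha> T" and r: "skew_row d B p q"
  shows "Ile \<alpha> (set p \<union> (B - set q)) \<longleftrightarrow> diff_le (coord1 T) (coord2 T) (mset p) (mset q)"
    and "Ile (set p \<union> (B - set q)) \<alpha> \<longleftrightarrow> diff_le (mset p) (mset q) (coord1 T) (coord2 T)"
proof -
  have "sorted_wrt (<) p" "sorted_wrt (<) q" using r unfolding skew_row_def by auto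
  note cnts = cnt_le_mset_sorted[OF this(1)] cnt_le_mset_sorted[OF this(2)] coords_is_T[OF T]
    cnt_le_mset_set[OF finite_Diff[OF IsetD(1)[OF A]]] cnt_le_mset_set[OF finite_Diff[OF IsetD(1)[OF B]]]
  show "Ile \<alpha> (set p \<union> (B - set q)) \<longleftrightarrow> diff_le (coord1 T) (coord2 T) (mset p) (mset q)"
    unfolding diff_le_def cnts
    using Ile_iff_count_upto_diff[of \<alpha> "set p \<union> (B - set q)" B] skew_rowD(2,3,9)[OF B r] IsetD(1,3)[OF A]
      IsetD(1)[OF B] by simp
  show "Ile (set p \<union> (B - set q)) \<alpha> \<longleftrightarrow> diff_le (mset p) (mset q) (coord1 T) (coord2 T)"
    unfolding diff_le_def cnts
    using Ile_iff_count_upto_diff[of "set p \<union> (B - set q)" \<alpha> B] skew_rowD(2,3,9)[OF B r] IsetD(1,3)[OF A]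
      IsetD(1)[OF B] by simp
qed

lemma Ile_row_beta_iff:
  assumes B: "B \<in> Iset d" and r: "skew_row d B p q"
  shows "Ile (set p \<union> (B - set q)) B \<longleftrightarrow> Ile (set p) (set q)"
    and "Ile B (set p \<union> (B - set q)) \<longleftrightarrow> Ile (set q) (set p)"
proof -
  note row = skew_rowD[OF B r]
  have "card (set p) = card (set q)"
    using r distinct_card strict_sorted_iff unfolding skew_row_def by metis
  note Ile_pq = Ile_iff_count_upto[of "set p" "set q"] Ile_iff_count_upto[of "set q" "set p"]
  show "Ile (set p \<union> (B - set q)) B \<longleftrightarrow> Ile (set p) (set q)"
    using Ile_iff_count_upto_diff[of "set p \<union> (B - set q)" B B] row(2,3,9) IsetD(1,3)[OF B] Ile_pq
      \<open>card (set p) = card (set q)\<close> by simp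
  show "Ile B (set p \<union> (B - set q)) \<longleftrightarrow> Ile (set q) (set p)"
    using Ile_iff_count_upto_diff[of B "set p \<union> (B - set q)" B] row(2,3,9) IsetD(1,3)[OF B] Ile_pq
      \<open>card (set p) = card (set q)\<close> by simp
qed

lemma Ilt_row_beta_iff:
  assumes B: "B \<in> Iset d" and r: "skew_row d B p q"
  shows "Ilt (set p \<union> (B - set q)) B \<longleftrightarrow> diff_lt_empty (mset p) (mset q)"
    and "Ilt B (set p \<union> (B - set q)) \<longleftrightarrow> diff_gt_empty (mset p) (mset q)"
proof -
  note row = skew_rowD[OF B r]
  have s: "sorted_wrt (<) p" "sorted_wrt (<) q" and l: "length p = length q"
    using r unfolding skew_row_def by auto
  have sort: "sort p = p" "sort q = q" using s by (simp_all add: sorted_sort_id strict_sorted_imp_sorted)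
  \<comment> \<open>\<open>p\<close> avoids \<open>\<beta>\<close> while \<open>q \<subseteq> \<beta>\<close>, so no column has equal entries\<close>
  have ne: "p!j \<noteq> q!j" if "j < length p" for j
  proof -
    have "p!j \<in> set p" "q!j \<in> set q" using that l by simp_all
    then show ?thesis using row(6,8) by auto
  qed
  have "Ilt (set p \<union> (B - set q)) B \<longleftrightarrow> (\<forall>j<length p. p!j \<le> q!j)"
    unfolding Ilt_def using Ile_row_beta_iff(1)[OF B r] Ile_set_iff_nth[OF s l] row(10) by simp
  also have "\<dots> \<longleftrightarrow> diff_lt_empty (mset p) (mset q)"
    unfolding diff_lt_empty_def using sort l ne by (auto simp: le_less)
  finally show "Ilt (set p \<union> (B - set q)) B \<longleftrightarrow> diff_lt_empty (mset p) (mset q)" .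
  have "Ilt B (set p \<union> (B - set q)) \<longleftrightarrow> (\<forall>j<length p. q!j \<le> p!j)"
    unfolding Ilt_def using Ile_row_beta_iff(2)[OF B r] Ile_set_iff_nth[OF s(2,1) l[symmetric]] row(10) l
    by auto
  also have "\<dots> \<longleftrightarrow> diff_gt_empty (mset p) (mset q)"
    unfolding diff_gt_empty_def using sort l ne by (fastforce simp: le_less)
  finally show "Ilt B (set p \<union> (B - set q)) \<longleftrightarrow> diff_gt_empty (mset p) (mset q)" .
qed

definition skew_tab :: "nat \<Rightarrow> nat set \<Rightarrow> nat list list \<Rightarrow> nat list list \<Rightarrow> bool" where
  "skew_tab d B P Q \<longleftrightarrow> length P = length Q \<and> (\<forall>i<length P. skew_row d B (P!i) (Q!i))"

lemma skew_tabD: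
  assumes "skew_tab d B P Q"
  shows "length P = length Q" and "\<And>i. i < length P \<Longrightarrow> skew_row d B (P!i) (Q!i)"
  using assms unfolding skew_tab_def by auto

lemma length_tab_to_monomial: "length P = length Q \<Longrightarrow> length (tab_to_monomial B (P, Q)) = length P"
  unfolding tab_to_monomial_def by simp

lemma nth_tab_to_monomial: "length P = length Q \<Longrightarrow> i < length P \<Longrightarrow>
   tab_to_monomial B (P, Q) ! i = set (P!i) \<union> (B - set (Q!i))"
  unfolding tab_to_monomial_def by simp

lemma box_dual_eq_dualn:
  assumes B: "B \<in> Iset d" and sk: "skew_tab d B P Q" and v: "valid_box P x"
  shows "box_dual P Q x = dualn d (box_val P Q x)" and "box_val P Q x \<in> {1..2*d}"
proof -
  obtain s i j where x: "x = (s, i, j)" by (cases x) auto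
  have i: "i < length P" and j: "j < length (P!i)" using v x unfolding valid_box_def by auto
  have r: "skew_row d B (P!i) (Q!i)" using skew_tabD(2)[OF sk i] .
  have pr: "set (P!i) \<subseteq> {1..2*d}" using r unfolding skew_row_def by auto
  let ?k = "length (P!i)"
  have Q_nth: "Q!i!j' = dualn d (P!i!(?k - Suc j'))" if "j' < ?k" for j'
    using that skew_rowD(7)[OF B r] by (simp add: rev_nth)
  have P_range: "P!i!j' \<in> {1..2*d}" if "j' < ?k" for j'
    using that pr by (auto dest: nth_mem)
  show "box_dual P Q x = dualn d (box_val P Q x)"
  proof (cases s)
    case True
    have "?k - Suc (?k - 1 - j) = j" using j by simp
    then show ?thesis using True x Q_nth[of "?k - 1 - j"] j unfolding box_dual_def box_val_def by simp
  next
    case False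
    have "P!i!(?k - Suc j) \<in> {1..2*d}" using P_range j by simp
    then show ?thesis using False x Q_nth[OF j] dualn_dualn[of "P!i!(?k - Suc j)" d]
      unfolding box_dual_def box_val_def by simp
  qed
  show "box_val P Q x \<in> {1..2*d}"
    using x Q_nth[OF j] P_range[OF j] dualn_in_range[OF P_range[of "?k - Suc j"]] j
    unfolding box_val_def by auto
qed

lemma skew_tab_if_skew_symmetric:
  assumes sk: "skew_symmetric P Q" and ob: "on_bbar_b d B P Q"
  shows "skew_tab d B P Q"
  unfolding skew_tab_def
proof (intro conjI allI impI)
  have ss: "semistandard P Q" and ev: "\<forall>i<length P. even (length (P ! i))"
    using sk unfolding skew_symmetric_def by auto
  then have bt: "bitableau P Q" unfolding semistandard_def by simp
  then show "length P = length Q" unfolding bitableau_def by auto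
  fix i assume i: "i < length P"
  let ?p = "P!i" and ?q = "Q!i"
  let ?k = "length ?p"
  have lq: "length ?q = ?k" and ne: "?p \<noteq> []" using bt i unfolding bitableau_def by auto
  have "sorted_wrt (<) ?p" "sorted_wrt (<) ?q" using ss i unfolding semistandard_def by simp_all
  moreover have "set ?p \<subseteq> {1..2*d} - B" using ob i unfolding on_bbar_b_def by simp
  moreover have pair: "?q!(?k - 1 - j) = dualn d (?p!j)" if "j < ?k" for j
  proof -
    have "valid_box P (True, i, j)" using i that unfolding valid_box_def by simp
    then have "?p!j + ?q!(?k - 1 - j) = 2*d+1"
      using ob unfolding on_bbar_b_def box_val_def box_dual_def by fastforce
    then show ?thesis unfolding dualn_def by simp
  qed
  have "set ?q = dualn d ` set ?p"
  proof
    show "set ?q \<subseteq> dualn d ` set ?p"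
    proof
      fix y assume "y \<in> set ?q"
      then obtain j where j: "j < ?k" "y = ?q!j" using lq by (auto simp: in_set_conv_nth)
      then have "y = dualn d (?p!(?k - 1 - j))" using pair[of "?k - 1 - j"] by simp
      then show "y \<in> dualn d ` set ?p" using j(1) by auto
    qed
    show "dualn d ` set ?p \<subseteq> set ?q"
    proof
      fix y assume "y \<in> dualn d ` set ?p"
      then obtain j where j: "j < ?k" "y = dualn d (?p!j)" by (auto simp: in_set_conv_nth)
      have "?k - 1 - j < length ?q" using j(1) lq by simp
      then show "y \<in> set ?q" using pair[OF j(1)] j(2) nth_mem by metis
    qed
  qed
  ultimately show "skew_row d B ?p ?q" unfolding skew_row_def using lq ne ev i by simp
qed

lemma bitableau_if_skew_tab: "skew_tab d B P Q \<Longrightarrow> bitableau P Q"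
  unfolding bitableau_def
proof (intro conjI allI impI)
  assume sk: "skew_tab d B P Q"
  then show "length P = length Q" by (rule skew_tabD(1))
  fix i assume "i < length P"
  then have r: "skew_row d B (P!i) (Q!i)" by (rule skew_tabD(2)[OF sk])
  then show "length (P!i) = length (Q!i)" "P!i \<noteq> []" "\<forall>x\<in>set (P!i). 0 < x"
    unfolding skew_row_def by auto
  have "set (Q!i) \<subseteq> dualn d ` {1..2*d}" using r unfolding skew_row_def by auto
  then show "\<forall>x\<in>set (Q!i). 0 < x" using dualn_in_range by fastforce
qed

lemma semistandard_iff_diff_le_chain:
  assumes sk: "skew_tab d B P Q"
  shows "semistandard P Q \<longleftrightarrow> (\<forall>i. Suc i < length P \<longrightarrow>
    diff_le (mset (P!i)) (mset (Q!i)) (mset (P!Suc i)) (mset (Q!Suc i)))"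
proof -
  have "\<forall>i<length P. sorted_wrt (<) (P!i) \<and> sorted_wrt (<) (Q!i)"
    using skew_tabD(2)[OF sk] unfolding skew_row_def by simp
  then show ?thesis unfolding semistandard_def using bitableau_if_skew_tab[OF sk] by simp
qed

lemma skew_symmetric_iff_semistandard:
  assumes B: "B \<in> Iset d" and sk: "skew_tab d B P Q"
  shows "skew_symmetric P Q \<longleftrightarrow> semistandard P Q"
proof -
  have "even (length (P!i))" if "i < length P" for i
    using skew_tabD(2)[OF sk that] unfolding skew_row_def by blast
  moreover have "(box_val P Q x < box_val P Q y \<longrightarrow> box_dual P Q x > box_dual P Q y) \<and>
        (box_val P Q x = box_val P Q y \<longrightarrow> box_dual P Q x = box_dual P Q y)"
    if "valid_box P x" "valid_box P y" for x y
    using box_dual_eq_dualn[OF B sk that(1)] box_dual_eq_dualn[OF B sk that(2)] dualn_less_dualn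
    by simp
  ultimately show ?thesis unfolding skew_symmetric_def by blast
qed

lemma skew_symmetric_iff_Ile_chain:
  assumes B: "B \<in> Iset d" and sk: "skew_tab d B P Q"
  defines "\<theta>s \<equiv> tab_to_monomial B (P, Q)"
  shows "skew_symmetric P Q \<longleftrightarrow> (\<forall>i. Suc i < length \<theta>s \<longrightarrow> Ile (\<theta>s!i) (\<theta>s!Suc i))"
proof -
  note l = skew_tabD(1)[OF sk] and r = skew_tabD(2)[OF sk]
  have "Ile (\<theta>s!i) (\<theta>s!Suc i) \<longleftrightarrow> diff_le (mset (P!i)) (mset (Q!i)) (mset (P!Suc i)) (mset (Q!Suc i))"
    if "Suc i < length P" for i
    using that Ile_rows_iff_diff_le[OF B r r] nth_tab_to_monomial[OF l] unfolding \<theta>s_def by simp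
  then show ?thesis
    unfolding skew_symmetric_iff_semistandard[OF B sk] semistandard_iff_diff_le_chain[OF sk]
    using length_tab_to_monomial[OF l] unfolding \<theta>s_def by auto
qed

lemma on_bbar_b_if_skew_tab:
  assumes B: "B \<in> Iset d" and sk: "skew_tab d B P Q"
  shows "on_bbar_b d B P Q"
  unfolding on_bbar_b_def
proof (intro conjI allI impI)
  fix i assume "i < length P"
  then have "skew_row d B (P!i) (Q!i)" by (rule skew_tabD(2)[OF sk])
  then show "set (P!i) \<subseteq> {1..2*d} - B" "set (Q!i) \<subseteq> B"
    using skew_rowD(6)[OF B] unfolding skew_row_def by auto
next
  fix x assume "valid_box P x"
  note box_dual_eq_dualn[OF B sk this]
  then show "box_val P Q x + box_dual P Q x = 2*d+1" unfolding dualn_def by simp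
qed

lemma nonvanishing_iff_Ilt:
  assumes B: "B \<in> Iset d" and sk: "skew_tab d B P Q"
  shows "nonvanishing P Q \<longleftrightarrow> (\<forall>\<theta>\<in>set (tab_to_monomial B (P, Q)). Ilt \<theta> B \<or> Ilt B \<theta>)"
proof -
  note l = skew_tabD(1)[OF sk] and r = skew_tabD(2)[OF sk]
  show ?thesis
    unfolding nonvanishing_def all_set_conv_all_nth length_tab_to_monomial[OF l]
    using Ilt_row_beta_iff[OF B r] nth_tab_to_monomial[OF l] by simp
qed

lemma bounded_by_iff_Ile:
  assumes B: "B \<in> Iset d" and A: "\<alpha> \<in> Iset d" and G: "\<gamma> \<in> Iset d"
    and T: "is_T d B \<alpha> T" and W: "is_T d B \<gamma> W" and sk: "skew_tab d B P Q"
  defines "\<theta>s \<equiv> tab_to_monomial B (P, Q)"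
  shows "bounded_by T W P Q \<longleftrightarrow> (\<theta>s \<noteq> [] \<longrightarrow> Ile \<alpha> (hd \<theta>s) \<and> Ile (last \<theta>s) \<gamma>)"
proof (cases "P = []")
  case True
  then show ?thesis unfolding \<theta>s_def bounded_by_def tab_to_monomial_def by simp
next
  case False
  note l = skew_tabD(1)[OF sk] and r = skew_tabD(2)[OF sk]
  let ?n = "length P - 1"
  have n: "0 < length P" "?n < length P" using False by simp_all
  have "length \<theta>s = length P" unfolding \<theta>s_def by (rule length_tab_to_monomial[OF l])
  then have "\<theta>s \<noteq> []" "Q \<noteq> []" using False l by auto
  then have "hd \<theta>s = set (hd P) \<union> (B - set (hd Q))" "last \<theta>s = set (last P) \<union> (B - set (last Q))"
    using False nth_tab_to_monomial[OF l n(1)] nth_tab_to_monomial[OF l n(2)] l length_tab_to_monomial[OF l]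
    unfolding \<theta>s_def by (simp_all add: hd_conv_nth last_conv_nth)
  moreover have "hd P = P!0" "hd Q = Q!0" "last P = P!?n" "last Q = Q!?n"
    using False \<open>Q \<noteq> []\<close> l by (simp_all add: hd_conv_nth last_conv_nth)
  ultimately show ?thesis unfolding bounded_by_def
    using Ile_is_T_iff_diff_le(1)[OF B A T r[OF n(1)]] Ile_is_T_iff_diff_le(2)[OF B G W r[OF n(2)]]
      False \<open>\<theta>s \<noteq> []\<close> by simp
qed

lemma tab_degree_eq_monomial_degree:
  assumes B: "B \<in> Iset d" and sk: "skew_tab d B P Q"
  shows "tab_degree P = 2 * monomial_degree B (tab_to_monomial B (P, Q))"
proof -
  let ?\<theta>s = "tab_to_monomial B (P, Q)"
  note l = skew_tabD(1)[OF sk] and r = skew_tabD(2)[OF sk]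
  have "length (P!i) = 2 * beta_degree B (?\<theta>s!i)" if i: "i < length P" for i
  proof -
    have "?\<theta>s!i - B = set (P!i)" using skew_rowD(2)[OF B r[OF i]] nth_tab_to_monomial[OF l i] by simp
    moreover have "card (set (P!i)) = length (P!i)" "even (length (P!i))"
      using r[OF i] distinct_card strict_sorted_iff unfolding skew_row_def by metis+
    ultimately show ?thesis unfolding beta_degree_def by simp
  qed
  then have "(\<Sum>i = 0..<length P. length (P!i)) = (\<Sum>i = 0..<length P. 2 * beta_degree B (?\<theta>s!i))"
    by (intro sum.cong) auto
  then show ?thesis
    unfolding tab_degree_def monomial_degree_def
    by (simp add: sum_list_sum_nth length_tab_to_monomial[OF l] sum_distrib_left)
qed

lemma tab_to_monomial_in_Iset:
  assumes B: "B \<in> Iset d" and sk: "skew_tab d B P Q"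
  shows "\<forall>\<theta>\<in>set (tab_to_monomial B (P, Q)). \<theta> \<in> Iset d"
proof -
  note l = skew_tabD(1)[OF sk] and r = skew_tabD(2)[OF sk]
  show ?thesis unfolding all_set_conv_all_nth length_tab_to_monomial[OF l]
    using skew_rowD(1)[OF B r] nth_tab_to_monomial[OF l] by simp
qed

lemma row_PQ_tab_to_monomial:
  assumes B: "B \<in> Iset d" and sk: "skew_tab d B P Q"
  shows "map (row_P B) (tab_to_monomial B (P, Q)) = P" "map (row_Q B) (tab_to_monomial B (P, Q)) = Q"
proof -
  note l = skew_tabD(1)[OF sk] and r = skew_tabD(2)[OF sk]
  show "map (row_P B) (tab_to_monomial B (P, Q)) = P" "map (row_Q B) (tab_to_monomial B (P, Q)) = Q"
    by (simp_all add: list_eq_iff_nth_eq length_tab_to_monomial[OF l] nth_tab_to_monomial[OF l]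
      skew_rowD(4,5)[OF B r] l)
qed

lemma skew_tab_row_PQ:
  assumes B: "B \<in> Iset d" and th: "\<forall>\<theta>\<in>set \<theta>s. \<theta> \<in> Iset d \<and> \<theta> \<noteq> B"
  shows "skew_tab d B (map (row_P B) \<theta>s) (map (row_Q B) \<theta>s)"
  unfolding skew_tab_def using skew_row_row_PQ[OF B] th by simp

lemma tab_to_monomial_row_PQ:
  assumes B: "B \<in> Iset d" and th: "\<forall>\<theta>\<in>set \<theta>s. \<theta> \<in> Iset d"
  shows "tab_to_monomial B (map (row_P B) \<theta>s, map (row_Q B) \<theta>s) = \<theta>s"
proof (rule nth_equalityI)
  fix i assume "i < length (tab_to_monomial B (map (row_P B) \<theta>s, map (row_Q B) \<theta>s))"
  then have i: "i < length \<theta>s" by (simp add: length_tab_to_monomial)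
  then have "finite (\<theta>s!i)" using th IsetD(1) nth_mem by blast
  then show "tab_to_monomial B (map (row_P B) \<theta>s, map (row_Q B) \<theta>s) ! i = \<theta>s ! i"
    using i exchange_row_PQ IsetD(1)[OF B] by (simp add: nth_tab_to_monomial)
qed (simp add: length_tab_to_monomial)

lemma tab_conditions_iff_std_monomial:
  assumes B: "B \<in> Iset d" and A: "\<alpha> \<in> Iset d" and G: "\<gamma> \<in> Iset d"
    and T: "is_T d B \<alpha> T" and W: "is_T d B \<gamma> W" and sk: "skew_tab d B P Q"
  defines "\<theta>s \<equiv> tab_to_monomial B (P, Q)"
  shows "(nonvanishing P Q \<and> skew_symmetric P Q \<and> on_bbar_b d B P Q \<and> bounded_by T W P Q
            \<and> tab_degree P = 2 * m)
    \<longleftrightarrow> (std_monomial d \<alpha> B \<gamma> \<theta>s \<and> monomial_degree B \<theta>s = m)"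
  using nonvanishing_iff_Ilt[OF B sk] skew_symmetric_iff_Ile_chain[OF B sk] on_bbar_b_if_skew_tab[OF B sk]
    bounded_by_iff_Ile[OF B A G T W sk] tab_degree_eq_monomial_degree[OF B sk] tab_to_monomial_in_Iset[OF B sk]
  unfolding std_monomial_def \<theta>s_def by auto

theorem lemma8p2:
  fixes d m :: nat and \<alpha> \<beta> \<gamma> :: "nat set" and T W :: "(nat \<times> nat) set"
  assumes "\<alpha> \<in> Iset d" and "\<beta> \<in> Iset d" and "\<gamma> \<in> Iset d"
    and "Ile \<alpha> \<beta>" and "Ile \<beta> \<gamma>"
    and "is_T d \<beta> \<alpha> T" and "is_T d \<beta> \<gamma> W"
    and "m \<ge> 1"
  shows "bij_betw (tab_to_monomial \<beta>)
    {(P, Q). nonvanishing P Q \<and> skew_symmetric P Q \<and> on_bbar_b d \<beta> P Q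
             \<and> bounded_by T W P Q \<and> tab_degree P = 2 * m}
    {\<theta>s. std_monomial d \<alpha> \<beta> \<gamma> \<theta>s \<and> monomial_degree \<beta> \<theta>s = m}"
proof -
  note B = assms(2) and conditions = tab_conditions_iff_std_monomial[OF assms(2,1,3,6,7), where m=m]
  let ?to_tab = "\<lambda>\<theta>s. (map (row_P \<beta>) \<theta>s, map (row_Q \<beta>) \<theta>s)"
  have rows: "\<forall>\<theta>\<in>set \<theta>s. \<theta> \<in> Iset d \<and> \<theta> \<noteq> \<beta>" if "std_monomial d \<alpha> \<beta> \<gamma> \<theta>s" for \<theta>s
    using that unfolding std_monomial_def Ilt_def by auto
  show ?thesis
  proof (rule bij_betw_byWitness[where f' = ?to_tab], safe)
    fix P Q
    assume "skew_symmetric P Q" "on_bbar_b d \<beta> P Q"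
    note sk = skew_tab_if_skew_symmetric[OF this]
    then show "map (row_P \<beta>) (tab_to_monomial \<beta> (P, Q)) = P" "map (row_Q \<beta>) (tab_to_monomial \<beta> (P, Q)) = Q"
      using row_PQ_tab_to_monomial[OF B] by simp_all
    assume "nonvanishing P Q" "bounded_by T W P Q" "tab_degree P = 2 * m"
    then show "std_monomial d \<alpha> \<beta> \<gamma> (tab_to_monomial \<beta> (P, Q))"
      "monomial_degree \<beta> (tab_to_monomial \<beta> (P, Q)) = m"
      using conditions[OF sk] \<open>skew_symmetric P Q\<close> \<open>on_bbar_b d \<beta> P Q\<close> by simp_all
  next
    fix \<theta>s assume "std_monomial d \<alpha> \<beta> \<gamma> \<theta>s"
    then show "tab_to_monomial \<beta> (?to_tab \<theta>s) = \<theta>s"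
      using tab_to_monomial_row_PQ[OF B] rows by simp
  next
    fix \<theta>s assume mon: "std_monomial d \<alpha> \<beta> \<gamma> \<theta>s" "m = monomial_degree \<beta> \<theta>s"
    then have "tab_to_monomial \<beta> (?to_tab \<theta>s) = \<theta>s"
      using tab_to_monomial_row_PQ[OF B] rows by simp
    with mon conditions[OF skew_tab_row_PQ[OF B rows[OF mon(1)]]]
    show "nonvanishing (map (row_P \<beta>) \<theta>s) (map (row_Q \<beta>) \<theta>s)"
      "skew_symmetric (map (row_P \<beta>) \<theta>s) (map (row_Q \<beta>) \<theta>s)"
      "on_bbar_b d \<beta> (map (row_P \<beta>) \<theta>s) (map (row_Q \<beta>) \<theta>s)"
      "bounded_by T W (map (row_P \<beta>) \<theta>s) (map (row_Q \<beta>) \<theta>s)"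
      "tab_degree (map (row_P \<beta>) \<theta>s) = 2 * monomial_degree \<beta> \<theta>s"
      by simp_all
  qed
qed

end
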